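(* Let $\phi,\psi\in L^\infty(\mathbb{T})$. If $V_\phi=V_\psi$, then $\phi=\psi$. That is, the correspondence $\phi\mapsto V_\phi$ from $L^\infty$ to bounded operators on $H^2$ is one-to-one.
   Context: $\mathbb{T}$ is the unit circle with normalized Lebesgue measure; $L^2=L^2(\mathbb{T})$ has orthonormal basis $e_n(z)=z^n$, $n\in\mathbb{Z}$; $H^2$ is the closed span of $\{e_n\}_{n\ge 0}$ and $P:L^2\to H^2$ is the orthogonal projection. For $\phi\in L^\infty$, $M_\phi$ is multiplication by $\phi$ on $L^2$. $W:L^2\to L^2$ is defined by $We_n=e_{n/2}$ if $n$ is even and $We_n=0$ if $n$ is odd. $K:H^2\to L^2$ is defined by $Ke_{2n}=e_n$ and $Ke_{2n+1}=e_{-n-1}$ for $n\ge 0$. The slant H-Toeplitz operator with symbol $\phi\in L^\infty$ is $V_\phi=WPM_\phi K:H^2\to H^2$. *)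

theory Defs
  imports "HOL-Analysis.Analysis"
begin

text \<open>The unit circle T is parametrised by t in [0,1] via circ t = exp(2 pi i t);
  normalized Lebesgue measure on T is Lebesgue measure on [0,1].
  L^2(T) is identified, via the orthonormal basis e_n, with square-summable
  coefficient sequences indexed by the integers (e_n corresponds to the n-th unit vector).\<close>

definition circ :: "real \<Rightarrow> complex" where
  "circ t = exp (2 * of_real pi * \<i> * of_real t)"

definition e :: "int \<Rightarrow> complex \<Rightarrow> complex" where
  "e n z = z powi n"

definition Linf :: "(complex \<Rightarrow> complex) \<Rightarrow> bool" where
  "Linf \<phi> \<longleftrightarrow> (\<lambda>t. \<phi> (circ t)) \<in> borel_measurable lborel \<and>
     (\<exists>C. AE t in lborel. t \<in> {0..1} \<longrightarrow> cmod (\<phi> (circ t)) \<le> C)"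

definition fourier :: "(complex \<Rightarrow> complex) \<Rightarrow> int \<Rightarrow> complex" where
  "fourier \<phi> n = (LINT t:{0..1}|lborel. \<phi> (circ t) * cnj (e n (circ t)))"

definition L2 :: "(int \<Rightarrow> complex) set" where
  "L2 = {a. (\<lambda>n. (cmod (a n))\<^sup>2) summable_on UNIV}"

definition H2 :: "(int \<Rightarrow> complex) set" where
  "H2 = {a. a \<in> L2 \<and> (\<forall>n<0. a n = 0)}"

definition Mop :: "(complex \<Rightarrow> complex) \<Rightarrow> (int \<Rightarrow> complex) \<Rightarrow> (int \<Rightarrow> complex)" where
  "Mop \<phi> a = (\<lambda>n. \<Sum>\<^sub>\<infinity>m. fourier \<phi> (n - m) * a m)"

definition Pop :: "(int \<Rightarrow> complex) \<Rightarrow> (int \<Rightarrow> complex)" where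
  "Pop a = (\<lambda>n. if n \<ge> 0 then a n else 0)"

text \<open>W e_n = e_(n/2) for even n, 0 for odd n.\<close>
definition Wop :: "(int \<Rightarrow> complex) \<Rightarrow> (int \<Rightarrow> complex)" where
  "Wop a = (\<lambda>n. a (2 * n))"

text \<open>K e_(2n) = e_n, K e_(2n+1) = e_(-n-1) for n >= 0 (applied to elements of H^2).\<close>
definition Kop :: "(int \<Rightarrow> complex) \<Rightarrow> (int \<Rightarrow> complex)" where
  "Kop a = (\<lambda>n. if n \<ge> 0 then a (2 * n) else a (- 2 * n - 1))"

definition slantHT :: "(complex \<Rightarrow> complex) \<Rightarrow> (int \<Rightarrow> complex) \<Rightarrow> (int \<Rightarrow> complex)" where
  "slantHT \<phi> a = Wop (Pop (Mop \<phi> (Kop a)))"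

end

theory Submission
  imports Defs
begin

text \<open>The coefficient of \<open>e\<^sub>0\<close> in \<open>V\<^sub>\<phi> e\<^sub>k\<close> is the Fourier coefficient of \<open>\<phi>\<close> at \<open>-m\<close>, where
  \<open>K e\<^sub>k = e\<^sub>m\<close>, and \<open>K\<close> maps the basis of \<open>H\<^sup>2\<close> onto that of \<open>L\<^sup>2\<close>. Hence \<open>V\<^sub>\<phi> = V\<^sub>\<psi>\<close> forces
  all Fourier coefficients of \<open>\<phi> - \<psi>\<close> to vanish, and the theorem reduces to uniqueness of
  Fourier coefficients of integrable functions on the circle. For that, Stone-Weierstrass makes
  trigonometric polynomials uniformly dense among continuous functions on the circle, so
  \<open>\<phi> - \<psi>\<close> annihilates every continuous function; bounded pointwise approximation of the
  indicators of arcs then shows that it integrates to zero over every interval \<open>(0, x)\<close>, and a Dynkin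
  system argument extends this to all Borel sets.\<close>

definition unit_vec :: "int \<Rightarrow> int \<Rightarrow> complex" where
  "unit_vec k = (\<lambda>n. if n = k then 1 else 0)"

lemma unit_vec_in_H2:
  assumes "0 \<le> k"
  shows "unit_vec k \<in> H2"
proof -
  have "(\<lambda>n. (cmod (unit_vec k n))\<^sup>2) summable_on {k}"
    by simp
  then have "(\<lambda>n. (cmod (unit_vec k n))\<^sup>2) summable_on UNIV"
    by (rule summable_on_cong_neutral[THEN iffD1, rotated -1]) (auto simp: unit_vec_def)
  with assms show ?thesis
    unfolding H2_def L2_def by (auto simp: unit_vec_def)
qed

lemma Kop_unit_vec_surj: "\<exists>k\<ge>0. Kop (unit_vec k) = unit_vec m"
proof (cases "0 \<le> m")
  case True
  then show ?thesis
    by (intro exI[of _ "2 * m"]) (auto simp: Kop_def unit_vec_def fun_eq_iff; presburger)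
next
  case False
  then show ?thesis
    by (intro exI[of _ "- 2 * m - 1"]) (auto simp: Kop_def unit_vec_def fun_eq_iff; presburger)
qed

lemma Mop_unit_vec: "Mop \<phi> (unit_vec m) n = fourier \<phi> (n - m)"
proof -
  have "Mop \<phi> (unit_vec m) n = (\<Sum>\<^sub>\<infinity>j\<in>{m}. fourier \<phi> (n - j) * unit_vec m j)"
    unfolding Mop_def by (rule infsum_cong_neutral) (auto simp: unit_vec_def)
  then show ?thesis
    by (simp add: unit_vec_def)
qed

lemma fourier_eq_if_slantHT_eq:
  assumes "\<forall>a\<in>H2. slantHT \<phi> a = slantHT \<psi> a"
  shows "fourier \<phi> n = fourier \<psi> n"
proof -
  obtain k where k: "0 \<le> k" "Kop (unit_vec k) = unit_vec (- n)"
    using Kop_unit_vec_surj by blast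
  have "slantHT \<phi> (unit_vec k) 0 = slantHT \<psi> (unit_vec k) 0"
    using assms unit_vec_in_H2[OF k(1)] by auto
  then show ?thesis
    unfolding slantHT_def Wop_def Pop_def k(2) by (simp add: Mop_unit_vec)
qed

lemma norm_circ [simp]: "cmod (circ t) = 1"
  unfolding circ_def by (simp add: norm_exp_eq_Re)

lemma circ_nonzero [simp]: "circ t \<noteq> 0"
  using norm_circ[of t] by (metis norm_zero zero_neq_one)

lemma cnj_circ: "cnj (circ t) = inverse (circ t)"
proof -
  have "circ t * cnj (circ t) = 1"
    using complex_norm_square[of "circ t"] by simp
  then show ?thesis
    by (rule inverse_unique[symmetric])
qed

lemma circ_powi: "circ t powi n = circ (of_int n * t)"
  unfolding circ_def by (simp add: exp_power_int algebra_simps)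

lemma continuous_on_circ [continuous_intros]: "continuous_on A circ"
  unfolding circ_def by (intro continuous_intros)

lemma borel_measurable_circ [measurable]: "circ \<in> borel_measurable borel"
  by (intro borel_measurable_continuous_onI continuous_on_circ)

lemma circ_eq_cis: "circ t = cis (2 * pi * t)"
  unfolding circ_def cis_conv_exp by (simp add: mult_ac)

lemma Re_circ_mult_cnj_circ: "Re (circ t * cnj (circ s)) = cos (2 * pi * (t - s))"
  unfolding circ_eq_cis cis_cnj cis_mult by (simp add: algebra_simps)

lemma fourier_uminus_eq_moment:
  "fourier \<phi> (- n) = (LINT t:{0..1}|lborel. \<phi> (circ t) * circ t powi n)"
  unfolding fourier_def e_def by (simp add: cnj_circ power_int_minus power_int_inverse)

lemma set_integrable_mult_bounded:
  fixes f g :: "'a \<Rightarrow> complex"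
  assumes f: "set_integrable M A f" and g: "g \<in> borel_measurable M"
    and bound: "\<And>x. x \<in> A \<Longrightarrow> cmod (g x) \<le> B"
  shows "set_integrable M A (\<lambda>x. f x * g x)"
proof (rule set_integrable_bound)
  show "set_integrable M A (\<lambda>x. of_real B * f x)"
    using f by (rule set_integrable_mult_right)
  have "(\<lambda>x. indicator A x *\<^sub>R f x) \<in> borel_measurable M"
    using f unfolding set_integrable_def by (rule borel_measurable_integrable)
  then show "set_borel_measurable M A (\<lambda>x. f x * g x)"
    using g unfolding set_borel_measurable_def by (simp add: scaleR_conv_of_real mult.assoc[symmetric])
  show "AE x in M. x \<in> A \<longrightarrow> cmod (f x * g x) \<le> cmod (of_real B * f x)"
  proof (intro AE_I2 impI)
    fix x assume "x \<in> A"
    then have "cmod (g x) \<le> \<bar>B\<bar>"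
      using bound by force
    then show "cmod (f x * g x) \<le> cmod (of_real B * f x)"
      by (simp add: norm_mult mult.commute[of "cmod (f x)"] mult_right_mono)
  qed
qed

lemma set_integrable_mult_circ_powi:
  "set_integrable lborel {0..1} f \<Longrightarrow> set_integrable lborel {0..1} (\<lambda>t. f t * (c * circ t powi n))"
  by (rule set_integrable_mult_bounded[of _ _ _ _ "cmod c"]) (auto simp: circ_powi norm_mult)

lemma Linf_set_integrable:
  assumes "Linf \<phi>"
  shows "set_integrable lborel {0..1} (\<lambda>t. \<phi> (circ t))"
proof -
  obtain C where meas: "(\<lambda>t. \<phi> (circ t)) \<in> borel_measurable lborel"
    and bound: "AE t in lborel. t \<in> {0..1} \<longrightarrow> cmod (\<phi> (circ t)) \<le> C"
    using assms unfolding Linf_def by blast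
  show ?thesis
  proof (rule set_integrable_bound)
    show "set_integrable lborel {0..1::real} (\<lambda>_. complex_of_real C)"
      unfolding set_integrable_def by (intro integrable_scaleR_left integrable_real_indicator) auto
    show "set_borel_measurable lborel {0..1} (\<lambda>t. \<phi> (circ t))"
      using meas unfolding set_borel_measurable_def by simp
    show "AE t in lborel. t \<in> {0..1} \<longrightarrow> cmod (\<phi> (circ t)) \<le> cmod (complex_of_real C)"
      using bound by eventually_elim auto
  qed
qed

inductive trig_poly :: "(real \<Rightarrow> complex) \<Rightarrow> bool" where
  monomial: "trig_poly (\<lambda>t. c * circ t powi n)"
| add: "trig_poly g \<Longrightarrow> trig_poly h \<Longrightarrow> trig_poly (\<lambda>t. g t + h t)"

lemma trig_poly_mult:
  assumes "trig_poly g" and "trig_poly h"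
  shows "trig_poly (\<lambda>t. g t * h t)"
  using assms
proof (induction g rule: trig_poly.induct)
  case (monomial c n)
  from monomial show ?case
  proof (induction h rule: trig_poly.induct)
    case (monomial d m)
    have "(\<lambda>t. c * circ t powi n * (d * circ t powi m)) = (\<lambda>t. (c * d) * circ t powi (n + m))"
      by (auto simp: power_int_add fun_eq_iff)
    then show ?case
      by (simp add: trig_poly.monomial)
  next
    case (add h1 h2)
    then show ?case
      using trig_poly.add[OF add.IH] by (simp add: distrib_left)
  qed
next
  case (add g1 g2)
  then show ?case
    using trig_poly.add[OF add.IH] by (simp add: distrib_right)
qed

lemma bounded_linear_complex_Re_Im:
  assumes "bounded_linear q"
  shows "q z = Re z * q 1 + Im z * q \<i>"
proof -
  interpret bounded_linear q by fact
  have "z = Re z *\<^sub>R 1 + Im z *\<^sub>R \<i>"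
    by (simp add: complex_eq_iff)
  then have "q z = q (Re z *\<^sub>R 1 + Im z *\<^sub>R \<i>)"
    by simp
  also have "\<dots> = Re z *\<^sub>R q 1 + Im z *\<^sub>R q \<i>"
    by (simp add: add scale)
  finally show ?thesis
    by simp
qed

lemma trig_poly_real_polynomial_function:
  assumes "real_polynomial_function q"
  shows "trig_poly (\<lambda>t. complex_of_real (q (circ t)))"
  using assms
proof (induction rule: real_polynomial_function.induct)
  case (linear q)
  define a where "a = complex_of_real (q 1) / 2 + complex_of_real (q \<i>) / (2 * \<i>)"
  define b where "b = complex_of_real (q 1) / 2 - complex_of_real (q \<i>) / (2 * \<i>)"
  have "complex_of_real (q (circ t)) = a * circ t powi 1 + b * circ t powi (-1)" for t
  proof -
    have Re: "complex_of_real (Re (circ t)) = (circ t + inverse (circ t)) / 2"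
      by (simp add: complex_eq_iff cnj_circ[symmetric])
    have Im: "complex_of_real (Im (circ t)) = (circ t - inverse (circ t)) / (2 * \<i>)"
      by (simp add: complex_eq_iff cnj_circ[symmetric])
    show ?thesis
      unfolding bounded_linear_complex_Re_Im[OF linear, of "circ t"] a_def b_def
      by (simp add: Re Im power_int_minus field_simps)
  qed
  then have "(\<lambda>t. complex_of_real (q (circ t))) = (\<lambda>t. a * circ t powi 1 + b * circ t powi (-1))"
    by auto
  then show ?case
    by (simp only: trig_poly.add[OF trig_poly.monomial trig_poly.monomial])
next
  case (const c)
  then show ?case
    using trig_poly.monomial[of "complex_of_real c" 0] by simp
next
  case (add f g)
  then show ?case
    using trig_poly.add by fastforce
next
  case (mult f g)
  then show ?case
    using trig_poly_mult by fastforce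
qed

lemma set_integral_mult_trig_poly_eq_0:
  fixes f :: "real \<Rightarrow> complex"
  assumes f: "set_integrable lborel {0..1} f"
    and moments: "\<And>n. (LINT t:{0..1}|lborel. f t * circ t powi n) = 0"
    and "trig_poly g"
  shows "set_integrable lborel {0..1} (\<lambda>t. f t * g t) \<and> (LINT t:{0..1}|lborel. f t * g t) = 0"
  using \<open>trig_poly g\<close>
proof (induction rule: trig_poly.induct)
  case (monomial c n)
  have "(LINT t:{0..1}|lborel. f t * (c * circ t powi n))
      = c * (LINT t:{0..1}|lborel. f t * circ t powi n)"
    by (simp add: algebra_simps)
  then show ?case
    using moments set_integrable_mult_circ_powi[OF f] by simp
next
  case (add g h)
  then show ?case
    by (simp add: distrib_left)
qed

lemma norm_set_integral_scaleR_le: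
  fixes f :: "'a \<Rightarrow> 'b::{banach, second_countable_topology}"
  assumes f: "set_integrable M A f" and gf: "set_integrable M A (\<lambda>x. g x *\<^sub>R f x)"
    and bound: "\<And>x. x \<in> A \<Longrightarrow> \<bar>g x\<bar> \<le> c"
  shows "norm (LINT x:A|M. g x *\<^sub>R f x) \<le> c * (LINT x:A|M. norm (f x))"
proof -
  have "norm (LINT x:A|M. g x *\<^sub>R f x) \<le> (LINT x:A|M. norm (g x *\<^sub>R f x))"
    using gf by (rule set_integral_norm_bound)
  also have "\<dots> \<le> (LINT x:A|M. c * norm (f x))"
  proof (rule set_integral_mono)
    show "set_integrable M A (\<lambda>x. norm (g x *\<^sub>R f x))"
      using gf by (rule set_integrable_norm)
    show "set_integrable M A (\<lambda>x. c * norm (f x))"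
      using set_integrable_norm[OF f] by (rule set_integrable_mult_right)
    show "norm (g x *\<^sub>R f x) \<le> c * norm (f x)" if "x \<in> A" for x
      using bound[OF that] by (simp add: mult_right_mono)
  qed
  also have "\<dots> = c * (LINT x:A|M. norm (f x))"
    by simp
  finally show ?thesis .
qed

lemma set_integral_continuous_eq_0:
  fixes f :: "real \<Rightarrow> complex" and Q :: "complex \<Rightarrow> real"
  assumes f: "set_integrable lborel {0..1} f"
    and moments: "\<And>n. (LINT t:{0..1}|lborel. f t * circ t powi n) = 0"
    and Q: "continuous_on (sphere 0 1) Q"
  shows "(LINT t:{0..1}|lborel. Q (circ t) *\<^sub>R f t) = 0" (is "?I = 0")
proof -
  have circ_sphere: "circ t \<in> sphere 0 1" for t
    by simp
  obtain B where B: "\<And>z. z \<in> sphere 0 1 \<Longrightarrow> \<bar>Q z\<bar> \<le> B"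
    using compact_imp_bounded[OF compact_continuous_image[OF Q compact_sphere]]
    by (metis bounded_iff imageI real_norm_def)
  have Q_meas: "(\<lambda>t. Q (circ t)) \<in> borel_measurable borel"
    by (intro borel_measurable_continuous_onI continuous_on_compose2[OF Q continuous_on_circ]) auto
  have scaleR_eq: "r *\<^sub>R f t = f t * complex_of_real r" for r t
    by (simp add: scaleR_conv_of_real)
  have int: "set_integrable lborel {0..1} (\<lambda>t. Q (circ t) *\<^sub>R f t)"
    unfolding scaleR_eq using Q_meas B circ_sphere
    by (intro set_integrable_mult_bounded[OF f, of _ B]) auto
  let ?N = "LINT t:{0..1}|lborel. cmod (f t)"
  have N: "0 \<le> ?N"
    unfolding set_lebesgue_integral_def by (intro integral_nonneg_AE) auto
  have "norm ?I \<le> \<epsilon>" if "0 < \<epsilon>" for \<epsilon>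
  proof -
    have "0 < \<epsilon> / (?N + 1)"
      using that N by simp
    then obtain q where q: "real_polynomial_function q"
      and approx: "\<And>z. z \<in> sphere 0 1 \<Longrightarrow> \<bar>Q z - q z\<bar> < \<epsilon> / (?N + 1)"
      using Stone_Weierstrass_real_polynomial_function[OF compact_sphere Q] by blast
    have "set_integrable lborel {0..1} (\<lambda>t. q (circ t) *\<^sub>R f t)"
      and "(LINT t:{0..1}|lborel. q (circ t) *\<^sub>R f t) = 0"
      using set_integral_mult_trig_poly_eq_0[OF f moments trig_poly_real_polynomial_function[OF q]]
      by (simp_all add: scaleR_eq)
    then have diff: "set_integrable lborel {0..1} (\<lambda>t. (Q (circ t) - q (circ t)) *\<^sub>R f t)"
      and "?I = (LINT t:{0..1}|lborel. (Q (circ t) - q (circ t)) *\<^sub>R f t)"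
      using int by (simp_all add: scaleR_diff_left set_integral_diff)
    moreover have "norm (LINT t:{0..1}|lborel. (Q (circ t) - q (circ t)) *\<^sub>R f t) \<le> \<epsilon> / (?N + 1) * ?N"
      by (rule norm_set_integral_scaleR_le[OF f diff less_imp_le[OF approx[OF circ_sphere]]])
    ultimately have "norm ?I \<le> \<epsilon> / (?N + 1) * ?N"
      by simp
    also have "\<dots> \<le> \<epsilon>"
      using N that by (simp add: field_simps)
    finally show ?thesis .
  qed
  then have "norm ?I \<le> 0"
    by (rule field_le_epsilon) simp
  then show ?thesis
    by simp
qed

lemma tendsto_clip:
  fixes d :: real
  shows "(\<lambda>k. min 1 (max 0 ((real k + 1) * d))) \<longlonglongrightarrow> (if 0 < d then 1 else 0)"
proof (cases "0 < d")
  case True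
  obtain N :: nat where N: "1 / d \<le> real N"
    using real_arch_simple by blast
  have "eventually (\<lambda>k. min 1 (max 0 ((real k + 1) * d)) = 1) sequentially"
    unfolding eventually_sequentially
  proof (intro exI allI impI)
    fix k assume "N \<le> k"
    then have "1 / d \<le> real k + 1"
      using N by linarith
    then have "1 \<le> (real k + 1) * d"
      using True by (simp add: field_simps)
    then show "min 1 (max 0 ((real k + 1) * d)) = 1"
      by simp
  qed
  then show ?thesis
    using True by (simp add: tendsto_eventually)
next
  case False
  then have "min 1 (max 0 ((real k + 1) * d)) = 0" for k
    by (simp add: mult_nonneg_nonpos)
  then show ?thesis
    using False by simp
qed

lemma cos_less_iff_in_arc:
  fixes x t :: real
  assumes x: "0 < x" "x \<le> 1" and t: "0 \<le> t" "t \<le> 1"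
  shows "cos (pi * x) < cos (2 * pi * (t - x / 2)) \<longleftrightarrow> 0 < t \<and> t < x"
proof (cases "0 < t \<and> t < x")
  case True
  have "cos (pi * x) < cos (2 * pi * \<bar>t - x / 2\<bar>)"
    by (rule cos_monotone_0_pi) (use x True in \<open>auto simp: abs_if algebra_simps\<close>)
  also have "2 * pi * \<bar>t - x / 2\<bar> = \<bar>2 * pi * (t - x / 2)\<bar>"
    by (simp add: abs_mult)
  finally show ?thesis
    using True by simp
next
  case False
  then consider "t = 0" | "x \<le> t" "t - x / 2 \<le> 1 / 2" | "1 / 2 < t - x / 2"
    using t by linarith
  then have "cos (2 * pi * (t - x / 2)) \<le> cos (pi * x)"
  proof cases
    case 1
    then show ?thesis
      by (simp add: algebra_simps)
  next
    case 2
    have "pi * (2 * (t - x / 2)) \<le> pi * 1"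
      by (rule mult_left_mono) (use 2 in auto)
    moreover have "pi * x \<le> pi * (2 * (t - x / 2))"
      by (rule mult_left_mono) (use 2 in auto)
    ultimately show ?thesis
      using x by (intro cos_monotone_0_pi_le) (auto simp: mult_ac)
  next
    case 3
    have "pi * (2 * (1 - (t - x / 2))) \<le> pi * 1"
      by (rule mult_left_mono) (use 3 in auto)
    moreover have "pi * x \<le> pi * (2 * (1 - (t - x / 2)))"
      by (rule mult_left_mono) (use t in auto)
    ultimately have "cos (2 * pi - 2 * pi * (t - x / 2)) \<le> cos (pi * x)"
      using x by (intro cos_monotone_0_pi_le) (auto simp: algebra_simps)
    then show ?thesis
      by simp
  qed
  then show ?thesis
    using False by simp
qed

lemma set_integral_scaleR_tendsto:
  fixes f :: "'a \<Rightarrow> 'b::{banach, second_countable_topology}"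
  assumes f: "set_integrable M A f"
    and meas: "\<And>k. g k \<in> borel_measurable M" "G \<in> borel_measurable M"
    and bound: "\<And>k x. x \<in> A \<Longrightarrow> \<bar>g k x\<bar> \<le> 1"
    and lim: "\<And>x. x \<in> A \<Longrightarrow> (\<lambda>k. g k x) \<longlonglongrightarrow> G x"
  shows "(\<lambda>k. LINT x:A|M. g k x *\<^sub>R f x) \<longlonglongrightarrow> (LINT x:A|M. G x *\<^sub>R f x)"
  unfolding set_lebesgue_integral_def
proof (rule integral_dominated_convergence[where w = "\<lambda>x. norm (indicator A x *\<^sub>R f x)"])
  have f_meas: "(\<lambda>x. indicator A x *\<^sub>R f x) \<in> borel_measurable M"
    using f unfolding set_integrable_def by (rule borel_measurable_integrable)
  have swap: "indicator A x *\<^sub>R (h x *\<^sub>R f x) = h x *\<^sub>R (indicator A x *\<^sub>R f x)" for h x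
    by simp
  show "(\<lambda>x. indicator A x *\<^sub>R (G x *\<^sub>R f x)) \<in> borel_measurable M"
    using meas(2) f_meas unfolding swap by (rule borel_measurable_scaleR)
  show "(\<lambda>x. indicator A x *\<^sub>R (g k x *\<^sub>R f x)) \<in> borel_measurable M" for k
    using meas(1) f_meas unfolding swap by (rule borel_measurable_scaleR)
  show "integrable M (\<lambda>x. norm (indicator A x *\<^sub>R f x))"
    using f unfolding set_integrable_def by (rule integrable_norm)
  show "AE x in M. (\<lambda>k. indicator A x *\<^sub>R (g k x *\<^sub>R f x)) \<longlonglongrightarrow> indicator A x *\<^sub>R (G x *\<^sub>R f x)"
    using lim by (intro AE_I2) (auto simp: indicator_def intro: tendsto_scaleR)
  show "AE x in M. norm (indicator A x *\<^sub>R (g k x *\<^sub>R f x)) \<le> norm (indicator A x *\<^sub>R f x)" for k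
    using bound by (intro AE_I2) (auto simp: indicator_def intro: mult_left_le_one_le)
qed

lemma set_integral_arc_eq_0:
  fixes f :: "real \<Rightarrow> complex"
  assumes f: "set_integrable lborel {0..1} f"
    and orth: "\<And>Q. continuous_on (sphere 0 1) Q \<Longrightarrow> (LINT t:{0..1}|lborel. Q (circ t) *\<^sub>R f t) = 0"
    and x: "0 < x" "x \<le> 1"
  shows "(LINT t:{0<..<x}|lborel. f t) = 0"
proof -
  \<comment> \<open>continuous cut-offs of the half-plane whose trace on the circle is the arc \<open>circ ` {0<..<x}\<close>\<close>
  define Q where "Q k z = min 1 (max 0 ((real k + 1) * (Re (z * cnj (circ (x / 2))) - cos (pi * x))))"
    for k :: nat and z
  have "(\<lambda>k. LINT t:{0..1}|lborel. Q k (circ t) *\<^sub>R f t)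
      \<longlonglongrightarrow> (LINT t:{0..1}|lborel. indicator {0<..<x} t *\<^sub>R f t)"
  proof (rule set_integral_scaleR_tendsto[OF f])
    show "(\<lambda>t. Q k (circ t)) \<in> borel_measurable lborel" for k
      unfolding Q_def by measurable
    show "indicat_real {0<..<x} \<in> borel_measurable lborel"
      by measurable
    show "\<bar>Q k (circ t)\<bar> \<le> 1" for k t
      unfolding Q_def by simp
    show "(\<lambda>k. Q k (circ t)) \<longlonglongrightarrow> indicator {0<..<x} t" if "t \<in> {0..1}" for t
    proof -
      have "indicator {0<..<x} t
          = (if 0 < Re (circ t * cnj (circ (x / 2))) - cos (pi * x) then 1 else 0 :: real)"
        unfolding Re_circ_mult_cnj_circ using cos_less_iff_in_arc[OF x, of t] that
        by (auto simp: indicator_def)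
      then show ?thesis
        unfolding Q_def by (simp only: tendsto_clip)
    qed
  qed
  moreover have "(LINT t:{0..1}|lborel. Q k (circ t) *\<^sub>R f t) = 0" for k
    by (rule orth) (unfold Q_def, intro continuous_intros)
  ultimately have "(LINT t:{0..1}|lborel. indicator {0<..<x} t *\<^sub>R f t) = 0"
    by (simp add: LIMSEQ_const_iff)
  moreover have "(LINT t:{0..1}|lborel. indicator {0<..<x} t *\<^sub>R f t) = (LINT t:{0<..<x}|lborel. f t)"
    using x unfolding set_lebesgue_integral_def
    by (intro Bochner_Integration.integral_cong) (auto simp: indicator_def)
  ultimately show ?thesis
    by simp
qed

lemma AE_eq_0_if_set_integral_lessThan_eq_0:
  fixes h :: "real \<Rightarrow> 'a::{banach, second_countable_topology}"
  assumes h: "integrable lborel h"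
    and zero: "\<And>x. (LINT t:{..<x}|lborel. h t) = 0"
  shows "AE t in lborel. h t = 0"
proof (rule sigma_finite_measure.density_zero[OF sigma_finite_lborel h])
  have set_int: "set_integrable lborel A h" if "A \<in> sets borel" for A
    unfolding set_integrable_def using that h by (intro integrable_mult_indicator) auto
  have "(\<lambda>n. LINT t:{..<real n}|lborel. h t) \<longlonglongrightarrow> (LINT t:(\<Union>n. {..<real n})|lborel. h t)"
    by (intro set_integral_cont_up set_int) (auto simp: incseq_def)
  moreover have "(\<Union>n. {..<real n}) = UNIV"
    by (auto intro: reals_Archimedean2)
  ultimately have total: "(LINT t:UNIV|lborel. h t) = 0"
    by (simp add: zero LIMSEQ_const_iff)
  have sets_eq: "sets borel = sigma_sets UNIV (range (lessThan :: real \<Rightarrow> real set))"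
    by (simp add: borel_Iio)
  have stable: "Int_stable (range (lessThan :: real \<Rightarrow> real set))"
  proof (unfold Int_stable_def, safe)
    fix a b :: real
    have "{..<a} \<inter> {..<b} = {..<min a b}"
      by auto
    then show "{..<a} \<inter> {..<b} \<in> range lessThan"
      by (metis rangeI)
  qed
  have generators: "range lessThan \<subseteq> Pow (UNIV :: real set)"
    by simp
  fix A :: "real set"
  assume "A \<in> sets lborel"
  then have "A \<in> sigma_sets UNIV (range lessThan)"
    using sets_eq by simp
  with stable generators show "(LINT t:A|lborel. h t) = 0"
  proof (induction rule: sigma_sets_induct_disjoint)
    case (basic A)
    then show ?case
      using zero by auto
  next
    case empty
    show ?case
      by (simp add: set_lebesgue_integral_def)
  next
    case (compl A)
    then have "A \<in> sets borel"
      using sets_eq by simp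
    then have "(LINT t:UNIV|lborel. h t) = (LINT t:A|lborel. h t) + (LINT t:UNIV - A|lborel. h t)"
      using set_integral_Un[of A "UNIV - A" lborel h] set_int by (simp add: sets.compl_sets)
    then show ?case
      using total compl.IH by simp
  next
    case (union A)
    then have "(LINT t:(\<Union>i. A i)|lborel. h t) = (\<Sum>i. LINT t:A i|lborel. h t)"
      using sets_eq by (intro lebesgue_integral_countable_add set_int sets.countable_UN)
        (auto simp: disjoint_family_on_def)
    then show ?case
      using union.IH by simp
  qed
qed

lemma AE_eq_0_if_moments_eq_0:
  fixes f :: "real \<Rightarrow> complex"
  assumes f: "set_integrable lborel {0..1} f"
    and moments: "\<And>n. (LINT t:{0..1}|lborel. f t * circ t powi n) = 0"
  shows "AE t in lborel. t \<in> {0..1} \<longrightarrow> f t = 0"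
proof -
  define h where "h t = indicator {0<..<1} t *\<^sub>R f t" for t
  have arc: "(LINT t:{0<..<x}|lborel. f t) = 0" if "0 < x" "x \<le> 1" for x
    using set_integral_arc_eq_0[OF f set_integral_continuous_eq_0[OF f moments] that] .
  have "integrable lborel h"
    using set_integrable_subset[OF f, of "{0<..<1}"] unfolding set_integrable_def h_def
    by (simp add: subset_eq)
  moreover have "(LINT t:{..<x}|lborel. h t) = 0" for x
  proof (cases "0 < x")
    case True
    have "(LINT t:{..<x}|lborel. h t) = (LINT t:{0<..<min x 1}|lborel. f t)"
      unfolding set_lebesgue_integral_def h_def
      by (intro Bochner_Integration.integral_cong) (auto simp: indicator_def)
    then show ?thesis
      using arc[of "min x 1"] True by simp
  next
    case False
    then have "(\<lambda>t. indicator {..<x} t *\<^sub>R h t) = (\<lambda>t. 0)"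
      by (auto simp: h_def indicator_def fun_eq_iff)
    then show ?thesis
      by (simp add: set_lebesgue_integral_def)
  qed
  ultimately have "AE t in lborel. h t = 0"
    by (rule AE_eq_0_if_set_integral_lessThan_eq_0)
  moreover have "AE t in lborel. t \<notin> {0, 1}"
    by (rule AE_not_in[OF countable_imp_null_set_lborel]) auto
  ultimately show ?thesis
    by eventually_elim (auto simp: h_def indicator_def)
qed

theorem mainTheorem1:
  fixes \<phi> \<psi> :: "complex \<Rightarrow> complex"
  assumes "Linf \<phi>" and "Linf \<psi>"
    and "\<forall>a\<in>H2. slantHT \<phi> a = slantHT \<psi> a"
  shows "AE t in lborel. t \<in> {0..1} \<longrightarrow> \<phi> (circ t) = \<psi> (circ t)"
proof -
  define f where "f t = \<phi> (circ t) - \<psi> (circ t)" for t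
  have f: "set_integrable lborel {0..1} f"
    unfolding f_def using Linf_set_integrable[OF assms(1)] Linf_set_integrable[OF assms(2)]
    by (rule set_integral_diff(1))
  have "(LINT t:{0..1}|lborel. f t * circ t powi n) = fourier \<phi> (- n) - fourier \<psi> (- n)" for n
    unfolding f_def fourier_uminus_eq_moment left_diff_distrib
    using set_integrable_mult_circ_powi[OF Linf_set_integrable, of _ 1 n] assms(1,2)
    by (simp add: set_integral_diff(2))
  then have "(LINT t:{0..1}|lborel. f t * circ t powi n) = 0" for n
    using fourier_eq_if_slantHT_eq[OF assms(3)] by simp
  then have "AE t in lborel. t \<in> {0..1} \<longrightarrow> f t = 0"
    by (rule AE_eq_0_if_moments_eq_0[OF f])
  then show ?thesis
    by eventually_elim (simp add: f_def)
qed

end
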